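(* There is an absolute constant $C$ such that for every alphabet $\Sigma$ of size $\sigma\ge 2$, every positive integer $d$, and every string $T$ over $\Sigma$ of length $n>d$, $\mathcal{S}(T,d)\le C\,d(n-d)$, i.e., $\mathcal{S}(T,d)\in O(d(n-d))$. This upper bound is tight when $\sigma\ge d+1$: there is an absolute constant $c>0$ such that for all integers $d,n,\sigma$ with $1\le d\le\sigma-1$ and $n>d$, there exists a string $T'$ of length $n$ over an alphabet of size $\sigma$ with $\mathcal{S}(T',d)\ge c\,d(n-d)$.
   Context: For a string $S$ over alphabet $\Sigma$, a string $w\in\Sigma^*$ is a minimal absent word (MAW) of $S$ if $w$ does not occur in $S$ but every proper substring of $w$ (including the empty string) occurs in $S$; $\mathsf{MAW}(S)$ is the set of all MAWs of $S$. $T[a..b]$ denotes the substring of $T$ from position $a$ to $b$. For a string $T$ of length $n>d$, $\mathcal{S}(T,d)=\sum_{i=1}^{n-d}|\mathsf{MAW}(T[i..i+d-1])\bigtriangleup\mathsf{MAW}(T[i+1..i+d])|$, where $\bigtriangleup$ is symmetric difference. *)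

theory Defs
  imports Complex_Main "HOL-Library.Sublist"
begin

text \<open>Strings are lists; "occurs in" means contiguous substring (Sublist.sublist).
  Alphabet Sigma is a finite set; strings over Sigma are lists with elements in Sigma.\<close>

definition MAW :: "'a set \<Rightarrow> 'a list \<Rightarrow> 'a list set" where
  "MAW \<Sigma> S = {w. set w \<subseteq> \<Sigma> \<and> \<not> sublist w S \<and>
                  (\<forall>u. sublist u w \<and> u \<noteq> w \<longrightarrow> sublist u S)}"

definition symdiff :: "'a set \<Rightarrow> 'a set \<Rightarrow> 'a set" where
  "symdiff A B = (A - B) \<union> (B - A)"

text \<open>T[i..i+d-1] (1-indexed) is take d (drop (i-1) T); the sum over i = 1..n-d is
  rendered 0-indexed over i < n - d.\<close>
definition S_MAW :: "'a set \<Rightarrow> 'a list \<Rightarrow> nat \<Rightarrow> nat" where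
  "S_MAW \<Sigma> T d = (\<Sum>i<length T - d.
      card (symdiff (MAW \<Sigma> (take d (drop i T))) (MAW \<Sigma> (take d (drop (Suc i) T)))))"

end

theory Submission
  imports Defs
begin

(* Sliding the window from T[i..i+d-1] to T[i+1..i+d] deletes the first letter and appends
   a new one, so it suffices to bound how much MAW(S) changes when a letter b is appended
   (prepending is the mirror image under reversal). Every MAW lost in passing from S to S b
   is a suffix of S b. A gained MAW w whose longest proper prefix u occurs in S has the form
   u b, and these prefixes u form a suffix-free family of factors of S, so each is identified
   by an end position in S. A gained MAW whose longest proper prefix does not occur in S has
   as that prefix the shortest suffix of S b absent from S, so it is identified by its last
   letter. Hence one window step changes at most 2 (3 (d - 1) + 4) <= 8 d MAWs.
   For the lower bound, let T' repeat d + 1 distinct letters cyclically: every window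
   consists of d distinct letters and its first letter a is absent from the next window,
   so the d words x a with x in the window are MAWs lost at every step. *)

lemma proper_sublist_butlast_or_tl:
  assumes "sublist u w" "u \<noteq> w"
  shows "sublist u (butlast w) \<or> sublist u (tl w)"
proof -
  obtain p s where w: "w = p @ u @ s" using assms(1) by (auto simp: sublist_def)
  show ?thesis
  proof (cases "s = []")
    case True
    then have "p \<noteq> []" using assms(2) w by auto
    then have "tl w = tl p @ u @ s" using w by (cases p) auto
    then show ?thesis by (auto simp: sublist_def)
  next
    case False
    then have "butlast w = p @ u @ butlast s" using w by (simp add: butlast_append)
    then show ?thesis by (auto simp: sublist_def)
  qed
qed

lemma sublist_singleton_iff: "sublist [y] S \<longleftrightarrow> y \<in> set S"
  by (auto simp: sublist_def in_set_conv_decomp)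

lemma sublist_snocI: "sublist u S \<Longrightarrow> sublist u (S @ [b])"
  by (rule sublist_order.order_trans[OF _ sublist_append_rightI])

lemma absent_suffix_unique:
  assumes "suffix u X" "suffix v X" "\<not> sublist u S" "\<not> sublist v S"
    and "sublist (tl u) S" "sublist (tl v) S"
  shows "u = v"
proof -
  have "u = v" if "suffix u v" "\<not> sublist u S" "sublist (tl v) S" for u v
  proof (rule ccontr)
    assume "u \<noteq> v"
    obtain zs where "v = zs @ u" using \<open>suffix u v\<close> by (auto simp: suffix_def)
    with \<open>u \<noteq> v\<close> have "sublist u (tl v)" by (cases zs) auto
    then have "sublist u S" using that(3) by (rule sublist_order.order_trans)
    with that(2) show False by contradiction
  qed
  moreover have "suffix u v \<or> suffix v u" using assms(1,2) suffix_same_cases by blast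
  ultimately show ?thesis using assms by metis
qed

lemma card_suffix_free_sublists_le:
  assumes "\<forall>u\<in>U. sublist u S"
    and "\<And>u v. u \<in> U \<Longrightarrow> v \<in> U \<Longrightarrow> suffix u v \<Longrightarrow> u = v"
  shows "card U \<le> length S + 1"
proof -
  have "\<exists>q. q \<le> length S \<and> suffix u (take q S)" if "u \<in> U" for u
  proof -
    have "sublist u S" using assms(1) that by blast
    then obtain p s where "S = p @ u @ s" by (auto simp: sublist_def)
    then show ?thesis by (intro exI[of _ "length p + length u"]) (auto simp: suffix_def)
  qed
  then obtain q where q: "\<And>u. u \<in> U \<Longrightarrow> q u \<le> length S \<and> suffix u (take (q u) S)"
    by metis
  have "inj_on q U"
  proof (rule inj_onI)
    fix u v assume "u \<in> U" "v \<in> U" "q u = q v"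
    then have "suffix u v \<or> suffix v u" using q suffix_same_cases by metis
    then show "u = v" using assms(2) \<open>u \<in> U\<close> \<open>v \<in> U\<close> by metis
  qed
  then have "card U \<le> card {0..length S}"
    by (rule card_inj_on_le) (use q in auto)
  then show ?thesis by simp
qed

lemma Nil_notin_MAW: "[] \<notin> MAW \<Sigma> S"
  by (auto simp: MAW_def)

lemma MAW_not_sublist: "w \<in> MAW \<Sigma> S \<Longrightarrow> \<not> sublist w S"
  by (simp add: MAW_def)

lemma MAW_iff_butlast_tl:
  assumes "w \<noteq> []"
  shows "w \<in> MAW \<Sigma> S \<longleftrightarrow>
    set w \<subseteq> \<Sigma> \<and> \<not> sublist w S \<and> sublist (butlast w) S \<and> sublist (tl w) S"
proof
  assume "w \<in> MAW \<Sigma> S"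
  moreover have "butlast w \<noteq> w" using assms by (cases w rule: rev_cases) auto
  moreover have "tl w \<noteq> w" using assms by (cases w) auto
  ultimately show "set w \<subseteq> \<Sigma> \<and> \<not> sublist w S \<and> sublist (butlast w) S \<and> sublist (tl w) S"
    by (auto simp: MAW_def)
next
  assume "set w \<subseteq> \<Sigma> \<and> \<not> sublist w S \<and> sublist (butlast w) S \<and> sublist (tl w) S"
  then show "w \<in> MAW \<Sigma> S"
    unfolding MAW_def using proper_sublist_butlast_or_tl sublist_order.order_trans by blast
qed

lemma finite_MAW:
  assumes "finite \<Sigma>"
  shows "finite (MAW \<Sigma> S)"
proof -
  have "MAW \<Sigma> S \<subseteq> {w. set w \<subseteq> \<Sigma> \<and> length w \<le> Suc (length S)}"
  proof
    fix w assume w: "w \<in> MAW \<Sigma> S"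
    then have "w \<noteq> []" using Nil_notin_MAW by metis
    then have "sublist (tl w) S" "set w \<subseteq> \<Sigma>" using w MAW_iff_butlast_tl by blast+
    then show "w \<in> {w. set w \<subseteq> \<Sigma> \<and> length w \<le> Suc (length S)}"
      using sublist_length_le by fastforce
  qed
  then show ?thesis using finite_subset finite_lists_length_le[OF assms] by blast
qed

lemma MAW_rev: "MAW \<Sigma> (rev S) = rev ` MAW \<Sigma> S"
proof -
  have iff: "w \<in> MAW \<Sigma> (rev S) \<longleftrightarrow> rev w \<in> MAW \<Sigma> S" for w
  proof (cases "w = []")
    case True
    then show ?thesis by (simp add: Nil_notin_MAW)
  next
    case False
    then have "rev w \<noteq> []" by simp
    have rev_ends: "butlast (rev w) = rev (tl w)" "tl (rev w) = rev (butlast w)"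
      by (simp add: butlast_rev) (metis butlast_rev rev_rev_ident)
    show ?thesis
      unfolding MAW_iff_butlast_tl[OF False] MAW_iff_butlast_tl[OF \<open>rev w \<noteq> []\<close>] rev_ends
      by (auto simp: sublist_rev_left)
  qed
  show ?thesis
  proof (rule set_eqI)
    fix w
    have "w \<in> rev ` MAW \<Sigma> S \<longleftrightarrow> rev w \<in> MAW \<Sigma> S"
      by (metis inj_image_mem_iff inj_on_rev rev_rev_ident)
    then show "w \<in> MAW \<Sigma> (rev S) \<longleftrightarrow> w \<in> rev ` MAW \<Sigma> S" using iff by simp
  qed
qed

lemma symdiff_commute: "symdiff A B = symdiff B A"
  by (auto simp: symdiff_def)

lemma card_symdiff_image:
  assumes "inj f"
  shows "card (symdiff (f ` A) (f ` B)) = card (symdiff A B)"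
proof -
  have "symdiff (f ` A) (f ` B) = f ` symdiff A B"
    unfolding symdiff_def using assms by (simp add: image_Un image_set_diff)
  then show ?thesis using assms by (simp add: card_image inj_on_subset)
qed

lemma card_symdiff_triangle:
  assumes "finite A" "finite B" "finite C"
  shows "card (symdiff A C) \<le> card (symdiff A B) + card (symdiff B C)"
proof -
  have "card (symdiff A C) \<le> card (symdiff A B \<union> symdiff B C)"
    using assms by (intro card_mono) (auto simp: symdiff_def)
  also have "\<dots> \<le> card (symdiff A B) + card (symdiff B C)" by (rule card_Un_le)
  finally show ?thesis .
qed

lemma MAW_snoc_lost_subset_suffixes:
  "MAW \<Sigma> S - MAW \<Sigma> (S @ [b]) \<subseteq> set (suffixes (S @ [b]))"
proof
  fix w assume w: "w \<in> MAW \<Sigma> S - MAW \<Sigma> (S @ [b])"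
  then have "w \<noteq> []" using Nil_notin_MAW by blast
  have "w \<in> MAW \<Sigma> S" "w \<notin> MAW \<Sigma> (S @ [b])" using w by simp_all
  then have m: "set w \<subseteq> \<Sigma>" "\<not> sublist w S" "sublist (butlast w) S" "sublist (tl w) S"
    and "\<not> (set w \<subseteq> \<Sigma> \<and> \<not> sublist w (S @ [b]) \<and> sublist (butlast w) (S @ [b])
              \<and> sublist (tl w) (S @ [b]))"
    unfolding MAW_iff_butlast_tl[OF \<open>w \<noteq> []\<close>] by simp_all
  then have "sublist w (S @ [b])"
    using m(1) sublist_snocI[OF m(3), of b] sublist_snocI[OF m(4), of b] by blast
  then show "w \<in> set (suffixes (S @ [b]))" using m(2) unfolding in_set_suffixes sublist_snoc by blast
qed

lemma card_MAW_snoc_lost: "card (MAW \<Sigma> S - MAW \<Sigma> (S @ [b])) \<le> length S + 2"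
proof -
  have "card (MAW \<Sigma> S - MAW \<Sigma> (S @ [b])) \<le> card (set (suffixes (S @ [b])))"
    by (intro card_mono MAW_snoc_lost_subset_suffixes) simp
  then show ?thesis unfolding card_set_suffixes by simp
qed

lemma MAW_snoc_gained_occurring:
  assumes w: "w \<in> MAW \<Sigma> (S @ [b]) - MAW \<Sigma> S" and occ: "sublist (butlast w) S"
  shows "w = butlast w @ [b]" and "suffix (tl w) (S @ [b])"
proof -
  have "w \<noteq> []" using w Nil_notin_MAW by blast
  have "w \<in> MAW \<Sigma> (S @ [b])" "w \<notin> MAW \<Sigma> S" using w by auto
  then have m: "\<not> sublist w (S @ [b])" "sublist (tl w) (S @ [b])" "set w \<subseteq> \<Sigma>"
    and "\<not> (set w \<subseteq> \<Sigma> \<and> \<not> sublist w S \<and> sublist (butlast w) S \<and> sublist (tl w) S)"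
    unfolding MAW_iff_butlast_tl[OF \<open>w \<noteq> []\<close>] by simp_all
  moreover have "\<not> sublist w S" using m(1) by (metis sublist_snocI)
  ultimately have "\<not> sublist (tl w) S" "sublist (tl w) (S @ [b])"
    using occ by blast+
  then show "suffix (tl w) (S @ [b])" by (simp add: sublist_snoc)
  with \<open>\<not> sublist (tl w) S\<close> obtain zs where "tl w = zs @ [b]" by auto
  then have "last w = b" using last_tl[of w] by simp
  with \<open>w \<noteq> []\<close> show "w = butlast w @ [b]" by (metis append_butlast_last_id)
qed

lemma card_MAW_snoc_gained_occurring:
  "card {w \<in> MAW \<Sigma> (S @ [b]) - MAW \<Sigma> S. sublist (butlast w) S} \<le> length S + 1"
  (is "card ?A \<le> _")
proof -
  have snoc: "w = butlast w @ [b]" and tl: "suffix (tl w) (S @ [b])" if "w \<in> ?A" for w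
    using MAW_snoc_gained_occurring[of w \<Sigma> S b] that by blast+
  have "inj_on butlast ?A"
  proof (rule inj_onI)
    fix w1 w2 assume "w1 \<in> ?A" "w2 \<in> ?A" "butlast w1 = butlast w2"
    then show "w1 = w2" using snoc[of w1] snoc[of w2] by simp
  qed
  then have "card ?A = card (butlast ` ?A)" by (rule card_image[symmetric])
  also have "\<dots> \<le> length S + 1"
  proof (rule card_suffix_free_sublists_le)
    show "\<forall>u\<in>butlast ` ?A. sublist u S" by auto
    fix u v assume "u \<in> butlast ` ?A" "v \<in> butlast ` ?A" "suffix u v"
    then obtain w1 w2 where w: "w1 \<in> ?A" "w2 \<in> ?A" "u = butlast w1" "v = butlast w2" by blast
    show "u = v"
    proof (rule ccontr)
      assume "u \<noteq> v"
      obtain zs where "v = zs @ u" using \<open>suffix u v\<close> by (auto simp: suffix_def)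
      with \<open>u \<noteq> v\<close> have "suffix (u @ [b]) (tl (v @ [b]))" by (cases zs) (auto simp: suffix_def)
      then have "suffix w1 (tl w2)" using w snoc[OF w(1)] snoc[OF w(2)] by simp
      then have "suffix w1 (S @ [b])" using tl[OF w(2)] by (rule suffix_order.order_trans)
      then show False using w(1) MAW_not_sublist suffix_imp_sublist by blast
    qed
  qed
  finally show ?thesis .
qed

lemma MAW_snoc_gained_nonoccurring:
  assumes w: "w \<in> MAW \<Sigma> (S @ [b]) - MAW \<Sigma> S" and nocc: "\<not> sublist (butlast w) S"
  shows "suffix (butlast w) (S @ [b])" and "sublist (tl (butlast w)) S" and "last w \<in> set (S @ [b])"
proof -
  have "w \<noteq> []" using w Nil_notin_MAW by blast
  have "w \<in> MAW \<Sigma> (S @ [b])" using w by simp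
  then have m: "sublist (butlast w) (S @ [b])" "sublist (tl w) (S @ [b])"
    unfolding MAW_iff_butlast_tl[OF \<open>w \<noteq> []\<close>] by simp_all
  with nocc show "suffix (butlast w) (S @ [b])" by (simp add: sublist_snoc)
  have "sublist (butlast (tl w)) S"
  proof (cases "sublist (tl w) S")
    case True
    then show ?thesis by (rule sublist_order.order_trans[OF sublist_butlast])
  next
    case False
    with m(2) have "suffix (tl w) (S @ [b])" by (simp add: sublist_snoc)
    then show ?thesis by auto
  qed
  then show "sublist (tl (butlast w)) S" by (simp add: butlast_tl)
  have "butlast w \<noteq> []" using nocc by auto
  then have "tl w \<noteq> []" by (cases w) auto
  then have "last w \<in> set (tl w)" using last_tl[of w] last_in_set by metis
  then show "last w \<in> set (S @ [b])" using set_mono_sublist[OF m(2)] by blast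
qed

lemma card_MAW_snoc_gained_nonoccurring:
  "card {w \<in> MAW \<Sigma> (S @ [b]) - MAW \<Sigma> S. \<not> sublist (butlast w) S} \<le> length S + 1"
  (is "card ?B \<le> _")
proof -
  have B: "w \<in> MAW \<Sigma> (S @ [b]) - MAW \<Sigma> S" "\<not> sublist (butlast w) S" if "w \<in> ?B" for w
    using that by simp_all
  have "inj_on last ?B"
  proof (rule inj_onI)
    fix w1 w2 assume w: "w1 \<in> ?B" "w2 \<in> ?B" and "last w1 = last w2"
    note g1 = MAW_snoc_gained_nonoccurring[OF B[OF w(1)]]
      and g2 = MAW_snoc_gained_nonoccurring[OF B[OF w(2)]]
    have "butlast w1 = butlast w2"
      using g1(1) g2(1) B(2)[OF w(1)] B(2)[OF w(2)] g1(2) g2(2) by (rule absent_suffix_unique)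
    moreover have "w1 \<noteq> []" "w2 \<noteq> []" using w Nil_notin_MAW by blast+
    ultimately show "w1 = w2" using \<open>last w1 = last w2\<close> by (metis append_butlast_last_id)
  qed
  moreover have "last ` ?B \<subseteq> set (S @ [b])" using MAW_snoc_gained_nonoccurring(3)[OF B] by blast
  ultimately have "card ?B \<le> card (set (S @ [b]))" by (rule card_inj_on_le) simp
  then show ?thesis using card_length[of "S @ [b]"] by simp
qed

lemma card_symdiff_MAW_snoc:
  "card (symdiff (MAW \<Sigma> S) (MAW \<Sigma> (S @ [b]))) \<le> 3 * length S + 4"
proof -
  let ?lost = "MAW \<Sigma> S - MAW \<Sigma> (S @ [b])" and ?gained = "MAW \<Sigma> (S @ [b]) - MAW \<Sigma> S"
  let ?A = "{w \<in> ?gained. sublist (butlast w) S}" and ?B = "{w \<in> ?gained. \<not> sublist (butlast w) S}"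
  have split: "symdiff (MAW \<Sigma> S) (MAW \<Sigma> (S @ [b])) = ?lost \<union> (?A \<union> ?B)"
    by (auto simp: symdiff_def)
  have "card (symdiff (MAW \<Sigma> S) (MAW \<Sigma> (S @ [b]))) \<le> card ?lost + (card ?A + card ?B)"
    unfolding split using card_Un_le[of ?lost "?A \<union> ?B"] card_Un_le[of ?A ?B] by linarith
  then show ?thesis
    using card_MAW_snoc_lost[of \<Sigma> S b] card_MAW_snoc_gained_occurring[of \<Sigma> S b]
      card_MAW_snoc_gained_nonoccurring[of \<Sigma> S b] by linarith
qed

lemma card_symdiff_MAW_Cons:
  "card (symdiff (MAW \<Sigma> (a # S)) (MAW \<Sigma> S)) \<le> 3 * length S + 4"
proof -
  have "MAW \<Sigma> (a # S) = rev ` MAW \<Sigma> (rev S @ [a])" "MAW \<Sigma> S = rev ` MAW \<Sigma> (rev S)"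
    using MAW_rev[of \<Sigma> "rev S @ [a]"] MAW_rev[of \<Sigma> "rev S"] by simp_all
  then have "card (symdiff (MAW \<Sigma> (a # S)) (MAW \<Sigma> S))
      = card (symdiff (MAW \<Sigma> (rev S)) (MAW \<Sigma> (rev S @ [a])))"
    using card_symdiff_image[of rev] symdiff_commute by (metis inj_on_rev)
  then show ?thesis using card_symdiff_MAW_snoc[of \<Sigma> "rev S" a] by simp
qed

lemma window_Cons_snoc:
  assumes "1 \<le> d" "i + d < length T"
  shows "take d (drop i T) = T ! i # take (d - 1) (drop (Suc i) T)"
    and "take d (drop (Suc i) T) = take (d - 1) (drop (Suc i) T) @ [T ! (i + d)]"
proof -
  have d: "d = Suc (d - 1)" using assms by simp
  have "drop i T = T ! i # drop (Suc i) T" using assms by (simp add: Cons_nth_drop_Suc)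
  then show "take d (drop i T) = T ! i # take (d - 1) (drop (Suc i) T)"
    by (subst d) simp
  show "take d (drop (Suc i) T) = take (d - 1) (drop (Suc i) T) @ [T ! (i + d)]"
    using assms by (subst d, subst take_Suc_conv_app_nth) auto
qed

lemma card_symdiff_MAW_window_step:
  assumes "finite \<Sigma>" "1 \<le> d" "i + d < length T"
  shows "card (symdiff (MAW \<Sigma> (take d (drop i T))) (MAW \<Sigma> (take d (drop (Suc i) T)))) \<le> 8 * d"
proof -
  define Z where "Z = take (d - 1) (drop (Suc i) T)"
  have "card (symdiff (MAW \<Sigma> (T ! i # Z)) (MAW \<Sigma> (Z @ [T ! (i + d)])))
      \<le> card (symdiff (MAW \<Sigma> (T ! i # Z)) (MAW \<Sigma> Z))
        + card (symdiff (MAW \<Sigma> Z) (MAW \<Sigma> (Z @ [T ! (i + d)])))"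
    using finite_MAW[OF assms(1)] by (intro card_symdiff_triangle)
  also have "\<dots> \<le> (3 * length Z + 4) + (3 * length Z + 4)"
    using card_symdiff_MAW_Cons card_symdiff_MAW_snoc by (rule add_mono)
  also have "\<dots> \<le> 8 * d" using assms unfolding Z_def by simp
  finally show ?thesis using window_Cons_snoc[OF assms(2,3)] unfolding Z_def by simp
qed

lemma S_MAW_le:
  assumes "finite \<Sigma>" "1 \<le> d"
  shows "S_MAW \<Sigma> T d \<le> 8 * d * (length T - d)"
proof -
  have "S_MAW \<Sigma> T d \<le> (\<Sum>i<length T - d. 8 * d)"
    unfolding S_MAW_def
    by (rule sum_mono) (use card_symdiff_MAW_window_step[OF assms] in auto)
  then show ?thesis by (simp add: mult.commute)
qed

lemma inj_on_mod_interval: "inj_on (\<lambda>j::nat. j mod m) {i..<i + m}"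
proof -
  have "j = j'" if "j \<le> j'" "j mod m = j' mod m" "j \<in> {i..<i + m}" "j' \<in> {i..<i + m}" for j j'
  proof -
    have "m dvd j' - j" using that(1,2) mod_eq_dvd_iff_nat by metis
    moreover have "j' - j < m" using that(3,4) by auto
    ultimately show ?thesis using that(1) nat_dvd_not_less by fastforce
  qed
  then show ?thesis by (intro inj_onI) (metis nat_le_linear)
qed

definition cyclic_word :: "'a list \<Rightarrow> nat \<Rightarrow> 'a list" where
  "cyclic_word L n = map (\<lambda>j. L ! (j mod length L)) [0..<n]"

lemma length_cyclic_word [simp]: "length (cyclic_word L n) = n"
  by (simp add: cyclic_word_def)

lemma set_cyclic_word: "L \<noteq> [] \<Longrightarrow> set (cyclic_word L n) \<subseteq> set L"
  by (auto simp: cyclic_word_def)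

lemma window_cyclic_word:
  assumes "i + d \<le> n"
  shows "take d (drop i (cyclic_word L n)) = map (\<lambda>j. L ! (j mod length L)) [i..<i + d]"
  using assms by (simp add: cyclic_word_def take_map drop_map)

lemma distinct_cyclic_segment:
  assumes "distinct L" "k \<le> length L"
  shows "distinct (map (\<lambda>j. L ! (j mod length L)) [i..<i + k])"
proof (cases "L = []")
  case True
  then show ?thesis using assms(2) by simp
next
  case False
  have "inj_on (\<lambda>j. j mod length L) {i..<i + k}"
    using inj_on_mod_interval[of "length L" i] by (rule inj_on_subset) (use assms(2) in auto)
  moreover have "inj_on (nth L) ((\<lambda>j. j mod length L) ` {i..<i + k})"
    using assms(1) False by (intro inj_on_nth) auto
  ultimately have "inj_on ((!) L \<circ> (\<lambda>j. j mod length L)) {i..<i + k}" by (rule comp_inj_on)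
  then show ?thesis by (simp add: distinct_map o_def)
qed

lemma card_symdiff_MAW_distinct_head:
  assumes "finite \<Sigma>" "distinct (a # U)" "set (a # U) \<subseteq> \<Sigma>" "a \<notin> set V"
  shows "length U + 1 \<le> card (symdiff (MAW \<Sigma> (a # U)) (MAW \<Sigma> V))"
proof -
  have new: "[x, a] \<in> MAW \<Sigma> (a # U) - MAW \<Sigma> V" if "x \<in> set (a # U)" for x
  proof -
    have "\<not> sublist [x, a] (a # U)"
      using assms(2) by (auto simp: sublist_Cons_right dest: set_mono_sublist set_mono_prefix)
    moreover have "sublist [x] (a # U)" "sublist [a] (a # U)" "\<not> sublist [a] V"
      using that assms(4) by (simp_all add: sublist_singleton_iff)
    moreover have "set [x, a] \<subseteq> \<Sigma>" using that assms(3) by auto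
    ultimately show ?thesis by (simp add: MAW_iff_butlast_tl)
  qed
  have "length U + 1 = card (set (a # U))" using distinct_card[OF assms(2)] by simp
  also have "\<dots> = card ((\<lambda>x. [x, a]) ` set (a # U))"
    by (rule card_image[symmetric]) (simp add: inj_on_def)
  also have "\<dots> \<le> card (symdiff (MAW \<Sigma> (a # U)) (MAW \<Sigma> V))"
    using new finite_MAW[OF assms(1)] by (intro card_mono) (auto simp: symdiff_def)
  finally show ?thesis .
qed

lemma S_MAW_cyclic_word_ge:
  assumes "finite \<Sigma>" "1 \<le> d" "distinct L" "length L = d + 1" "set L \<subseteq> \<Sigma>"
  shows "d * (n - d) \<le> S_MAW \<Sigma> (cyclic_word L n) d"
proof -
  define f where "f = (\<lambda>j. L ! (j mod length L))"
  have window_step: "d \<le> card (symdiff (MAW \<Sigma> (take d (drop i (cyclic_word L n))))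
                          (MAW \<Sigma> (take d (drop (Suc i) (cyclic_word L n)))))"
    if "i < n - d" for i
  proof -
    have head: "map f [i..<i + k] = f i # map f [Suc i..<i + k]" if "0 < k" for k
      using that by (simp add: upt_conv_Cons)
    have dist: "distinct (map f [i..<i + k])" if "k \<le> d + 1" for k
      using distinct_cyclic_segment[of L k i] assms(3,4) that unfolding f_def by simp
    have "0 < d" using assms(2) by simp
    have "distinct (map f [i..<i + d])" by (rule dist) simp
    then have "distinct (f i # map f [Suc i..<i + d])" unfolding head[OF \<open>0 < d\<close>] .
    have "distinct (map f [i..<i + Suc d])" by (rule dist) simp
    then have "distinct (f i # map f [Suc i..<Suc i + d])"
      unfolding head[of "Suc d", OF zero_less_Suc] by simp
    then have "f i \<notin> set (map f [Suc i..<Suc i + d])" by (metis distinct.simps(2))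
    moreover have "set (f i # map f [Suc i..<i + d]) \<subseteq> \<Sigma>"
      using assms(4,5) by (auto simp: f_def)
    ultimately have "length (map f [Suc i..<i + d]) + 1
        \<le> card (symdiff (MAW \<Sigma> (f i # map f [Suc i..<i + d])) (MAW \<Sigma> (map f [Suc i..<Suc i + d])))"
      using assms(1) \<open>distinct (f i # map f [Suc i..<i + d])\<close>
      by (intro card_symdiff_MAW_distinct_head)
    moreover have "take d (drop i (cyclic_word L n)) = f i # map f [Suc i..<i + d]"
      "take d (drop (Suc i) (cyclic_word L n)) = map f [Suc i..<Suc i + d]"
      using that head[OF \<open>0 < d\<close>] window_cyclic_word[of _ d n L, folded f_def] by simp_all
    ultimately show ?thesis using assms(2) by simp
  qed
  have "(\<Sum>i<n - d. d) \<le> S_MAW \<Sigma> (cyclic_word L n) d"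
    unfolding S_MAW_def length_cyclic_word by (rule sum_mono) (simp add: window_step)
  then show ?thesis by (simp add: mult.commute)
qed

lemma exists_word_S_MAW_ge:
  assumes "finite \<Sigma>" "1 \<le> d" "d + 1 \<le> card \<Sigma>"
  shows "\<exists>T. set T \<subseteq> \<Sigma> \<and> length T = n \<and> d * (n - d) \<le> S_MAW \<Sigma> T d"
proof -
  obtain A where A: "A \<subseteq> \<Sigma>" "card A = d + 1" using assms(3) by (rule obtain_subset_with_card_n)
  then have "finite A" using assms(1) finite_subset by blast
  then obtain L where "distinct L" "set L = A" using finite_distinct_list by blast
  with A have L: "distinct L" "length L = d + 1" "set L \<subseteq> \<Sigma>" by (auto simp: distinct_card)
  then have "L \<noteq> []" by auto
  then show ?thesis
    using S_MAW_cyclic_word_ge[OF assms(1,2) L, of n] set_cyclic_word[of L n] L(3)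
    by (intro exI[of _ "cyclic_word L n"]) auto
qed

theorem lemma16:
  shows "(\<exists>C::real. \<forall>(\<Sigma>::nat set) (d::nat) (T::nat list).
            finite \<Sigma> \<and> 2 \<le> card \<Sigma> \<and> 1 \<le> d \<and> set T \<subseteq> \<Sigma> \<and> d < length T \<longrightarrow>
            real (S_MAW \<Sigma> T d) \<le> C * real d * real (length T - d))
       \<and> (\<exists>c::real. c > 0 \<and> (\<forall>(\<Sigma>::nat set) (d::nat) (n::nat).
            finite \<Sigma> \<and> 1 \<le> d \<and> d + 1 \<le> card \<Sigma> \<and> d < n \<longrightarrow>
            (\<exists>T'::nat list. set T' \<subseteq> \<Sigma> \<and> length T' = n \<and>
               real (S_MAW \<Sigma> T' d) \<ge> c * real d * real (n - d))))"
proof -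
  have upper: "real (S_MAW \<Sigma> T d) \<le> 8 * real d * real (length T - d)"
    if "finite \<Sigma>" "1 \<le> d" for \<Sigma> :: "nat set" and d T
  proof -
    have "real (S_MAW \<Sigma> T d) \<le> real (8 * d * (length T - d))"
      using S_MAW_le[OF that] by (rule of_nat_mono)
    then show ?thesis by (simp only: of_nat_mult of_nat_numeral)
  qed
  have lower: "\<exists>T'. set T' \<subseteq> \<Sigma> \<and> length T' = n \<and> real (S_MAW \<Sigma> T' d) \<ge> 1 * real d * real (n - d)"
    if "finite \<Sigma>" "1 \<le> d" "d + 1 \<le> card \<Sigma>" for \<Sigma> :: "nat set" and d n
    using exists_word_S_MAW_ge[OF that, of n] by (auto simp flip: of_nat_mult)
  show ?thesis using upper lower zero_less_one by (intro conjI; blast)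
qed

end
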